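(* Let $M$ be a matroid with lattice of flats $L$ and rank function giving $r_{FG}=\operatorname{rk}G-\operatorname{rk}F$, and consider the weakly ranked poset $(L,2r)$. Define $\kappa\in\mathscr{I}(L,2r)$ by $$\kappa_{FH}(t):=(t-1)^{r_{FH}}\sum_{F\le G\le H}(-1)^{r_{FG}}\chi_{FG}(-1)\chi_{GH}(t),$$ and $h^{\mathrm{bc}}\in\mathscr{I}_{1/2}(L,2r)$ by $h^{\mathrm{bc}}_{FG}(t):=(-t)^{r_{FG}}\chi_{FG}(1-t^{-1})$. Then $\kappa$ is an $(L,2r)$-kernel, and $h^{\mathrm{bc}}$ is its left KLS-function.
   Context: For a locally finite poset $P$ with weak rank function $\rho$ (integers $\rho_{xy}$ for $x\le y$, positive for $x<y$, additive: $\rho_{xy}+\rho_{yz}=\rho_{xz}$): $I(P)=\prod_{x\le y}\mathbb{Z}[t]$ is a ring under convolution $(fg)_{xz}=\sum_{x\le y\le z}f_{xy}g_{yz}$; $\mathscr{I}(P,\rho)$ is the subring of $f$ with $\deg f_{xy}\le\rho_{xy}$, with involution $\bar f_{xy}(t)=t^{\rho_{xy}}f_{xy}(t^{-1})$; $\mathscr{I}_{1/2}(P,\rho)$ consists of $f\in\mathscr{I}(P,\rho)$ with $f_{xx}=1$ and $\deg f_{xy}<\rho_{xy}/2$ for $x<y$. A $(P,\rho)$-kernel is $\kappa\in\mathscr{I}(P,\rho)$ with $\kappa_{xx}=1$ and $\kappa^{-1}=\bar\kappa$; its left KLS-function is the unique $g\in\mathscr{I}_{1/2}(P,\rho)$ with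 $\bar g=g\kappa$. Here $(L,2r)$ means $L$ (ordered by inclusion) with weak rank function $\rho=2r$. The characteristic function is $\chi_{FG}(t)=\sum_{F\le E\le G}\mu_{FE}\,t^{r_{EG}}$, where $\mu$ is the Möbius function of $L$ (the inverse in $I(L)$ of the all-ones function $\zeta$). *)

theory Defs
  imports "HOL-Computational_Algebra.Polynomial"
begin

definition matroid :: "'a set \<Rightarrow> ('a set \<Rightarrow> bool) \<Rightarrow> bool" where
  "matroid E indep \<longleftrightarrow> finite E
     \<and> (\<forall>I. indep I \<longrightarrow> I \<subseteq> E)
     \<and> indep {}
     \<and> (\<forall>I J. indep J \<and> I \<subseteq> J \<longrightarrow> indep I)
     \<and> (\<forall>I J. indep I \<and> indep J \<and> card I < card J \<longrightarrow> (\<exists>e\<in>J - I. indep (insert e I)))"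

definition mrank :: "('a set \<Rightarrow> bool) \<Rightarrow> 'a set \<Rightarrow> nat" where
  "mrank indep X = Max (card ` {I. I \<subseteq> X \<and> indep I})"

definition flats :: "'a set \<Rightarrow> ('a set \<Rightarrow> bool) \<Rightarrow> 'a set set" where
  "flats E indep = {F. F \<subseteq> E \<and> (\<forall>e\<in>E - F. mrank indep F < mrank indep (insert e F))}"

definition rr :: "('a set \<Rightarrow> bool) \<Rightarrow> 'a set \<Rightarrow> 'a set \<Rightarrow> nat" where
  "rr indep F G = mrank indep G - mrank indep F"

definition intv :: "'b set set \<Rightarrow> 'b set \<Rightarrow> 'b set \<Rightarrow> 'b set set" where
  "intv S x y = {z \<in> S. x \<subseteq> z \<and> z \<subseteq> y}"

definition rel :: "'b set set \<Rightarrow> 'b set \<Rightarrow> 'b set \<Rightarrow> bool" where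
  "rel S x y \<longleftrightarrow> x \<in> S \<and> y \<in> S \<and> x \<subseteq> y"

definition incalg :: "'b set set \<Rightarrow> ('b set \<Rightarrow> 'b set \<Rightarrow> 'c::comm_ring_1) set" where
  "incalg S = {f. \<forall>x y. \<not> rel S x y \<longrightarrow> f x y = 0}"

definition conv :: "'b set set \<Rightarrow> ('b set \<Rightarrow> 'b set \<Rightarrow> 'c::comm_ring_1)
    \<Rightarrow> ('b set \<Rightarrow> 'b set \<Rightarrow> 'c) \<Rightarrow> ('b set \<Rightarrow> 'b set \<Rightarrow> 'c)" where
  "conv S f g = (\<lambda>x z. if rel S x z then (\<Sum>y\<in>intv S x z. f x y * g y z) else 0)"

definition delta :: "'b set set \<Rightarrow> 'b set \<Rightarrow> 'b set \<Rightarrow> 'c::comm_ring_1" where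
  "delta S = (\<lambda>x y. if x \<in> S \<and> y = x then 1 else 0)"

definition zeta :: "'b set set \<Rightarrow> 'b set \<Rightarrow> 'b set \<Rightarrow> 'c::comm_ring_1" where
  "zeta S = (\<lambda>x y. if rel S x y then 1 else 0)"

definition mobius :: "'b set set \<Rightarrow> 'b set \<Rightarrow> 'b set \<Rightarrow> 'c::comm_ring_1" where
  "mobius S = (THE m. m \<in> incalg S \<and> conv S m (zeta S) = delta S \<and> conv S (zeta S) m = delta S)"

text \<open>bar_poly n p = t^n p(t^{-1}) (for degree p \<le> n).\<close>
definition bar_poly :: "nat \<Rightarrow> 'c::comm_ring_1 poly \<Rightarrow> 'c poly" where
  "bar_poly n p = (\<Sum>i\<le>n. monom (coeff p (n - i)) i)"

definition bar :: "'b set set \<Rightarrow> ('b set \<Rightarrow> 'b set \<Rightarrow> nat)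
    \<Rightarrow> ('b set \<Rightarrow> 'b set \<Rightarrow> int poly) \<Rightarrow> ('b set \<Rightarrow> 'b set \<Rightarrow> int poly)" where
  "bar S rho f = (\<lambda>x y. if rel S x y then bar_poly (rho x y) (f x y) else 0)"

definition I_rho :: "'b set set \<Rightarrow> ('b set \<Rightarrow> 'b set \<Rightarrow> nat)
    \<Rightarrow> ('b set \<Rightarrow> 'b set \<Rightarrow> int poly) set" where
  "I_rho S rho = {f \<in> incalg S. \<forall>x y. rel S x y \<longrightarrow> degree (f x y) \<le> rho x y}"

definition I_half :: "'b set set \<Rightarrow> ('b set \<Rightarrow> 'b set \<Rightarrow> nat)
    \<Rightarrow> ('b set \<Rightarrow> 'b set \<Rightarrow> int poly) set" where
  "I_half S rho = {f \<in> I_rho S rho. (\<forall>x\<in>S. f x x = 1)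
      \<and> (\<forall>x y. rel S x y \<and> x \<noteq> y \<longrightarrow> 2 * degree (f x y) < rho x y)}"

definition is_kernel :: "'b set set \<Rightarrow> ('b set \<Rightarrow> 'b set \<Rightarrow> nat)
    \<Rightarrow> ('b set \<Rightarrow> 'b set \<Rightarrow> int poly) \<Rightarrow> bool" where
  "is_kernel S rho \<kappa> \<longleftrightarrow> \<kappa> \<in> I_rho S rho \<and> (\<forall>x\<in>S. \<kappa> x x = 1)
     \<and> conv S \<kappa> (bar S rho \<kappa>) = delta S \<and> conv S (bar S rho \<kappa>) \<kappa> = delta S"

definition is_left_KLS :: "'b set set \<Rightarrow> ('b set \<Rightarrow> 'b set \<Rightarrow> nat)
    \<Rightarrow> ('b set \<Rightarrow> 'b set \<Rightarrow> int poly) \<Rightarrow> ('b set \<Rightarrow> 'b set \<Rightarrow> int poly) \<Rightarrow> bool" where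
  "is_left_KLS S rho \<kappa> g \<longleftrightarrow> g \<in> I_half S rho \<and> bar S rho g = conv S g \<kappa>
     \<and> (\<forall>g'. g' \<in> I_half S rho \<and> bar S rho g' = conv S g' \<kappa> \<longrightarrow> g' = g)"

definition chi :: "'a set \<Rightarrow> ('a set \<Rightarrow> bool) \<Rightarrow> 'a set \<Rightarrow> 'a set \<Rightarrow> int poly" where
  "chi E indep F G = (\<Sum>H\<in>intv (flats E indep) F G.
       mobius (flats E indep) F H * [:0, 1:] ^ rr indep H G)"

definition kappaM :: "'a set \<Rightarrow> ('a set \<Rightarrow> bool) \<Rightarrow> 'a set \<Rightarrow> 'a set \<Rightarrow> int poly" where
  "kappaM E indep F H = (if rel (flats E indep) F H then
       [:-1, 1:] ^ rr indep F H *
       (\<Sum>G\<in>intv (flats E indep) F H.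
          smult ((-1) ^ rr indep F G * poly (chi E indep F G) (-1)) (chi E indep G H))
     else 0)"

text \<open>h^bc_{FG}(t) = (-t)^{r_{FG}} chi_{FG}(1 - t^{-1})
   = (-1)^{r_{FG}} * t^{r_{FG}} * (chi_{FG} o (1 - s))(t^{-1}).\<close>
definition hbc :: "'a set \<Rightarrow> ('a set \<Rightarrow> bool) \<Rightarrow> 'a set \<Rightarrow> 'a set \<Rightarrow> int poly" where
  "hbc E indep F G = (if rel (flats E indep) F G then
       smult ((-1) ^ rr indep F G)
         (bar_poly (rr indep F G) (pcompose (chi E indep F G) [:1, -1:]))
     else 0)"

end

theory Submission
  imports Defs
begin

(* Write Z_a and M_a for the zeta and Moebius functions of L weighted by a^(r_FG).  Since r is
   additive, this weighting commutes with convolution, so M_a is the inverse of Z_a, and the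
   involution maps M_a Z_b to M_a' Z_b', where p'(t) = t^2 p(1/t).  Unwinding the definitions,
   kappa = M_(1-t) Z_(t^2-t) and h^bc = M_(-t) Z_(1-t).  The bar exchanges 1-t and t^2-t and fixes
   -t, hence kappa kappa' = M_(1-t) Z_(t^2-t) M_(t^2-t) Z_(1-t) = delta and
   (h^bc)' = M_(-t) Z_(t^2-t) = h^bc kappa.  The degree bound on h^bc comes from chi_FG(1) = 0 for
   F < G, and KLS-functions are unique by induction along the rank. *)

lemma finite_intv: "finite S \<Longrightarrow> finite (intv S x y)"
  by (simp add: intv_def)

lemma intv_rel:
  assumes "rel S x w" "y \<in> intv S x w"
  shows "rel S x y" "rel S y w"
  using assms by (auto simp: intv_def rel_def)

lemma conv_rel: "rel S x z \<Longrightarrow> conv S f g x z = (\<Sum>y\<in>intv S x z. f x y * g y z)"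
  by (simp add: conv_def)

lemma conv_in_incalg: "conv S f g \<in> incalg S"
  by (simp add: conv_def incalg_def)

lemma zeta_in_incalg: "zeta S \<in> incalg S"
  by (simp add: zeta_def incalg_def)

lemma conv_assoc:
  assumes "finite S"
  shows "conv S (conv S f g) h = conv S f (conv S g h)"
proof (intro ext)
  fix x w
  show "conv S (conv S f g) h x w = conv S f (conv S g h) x w"
  proof (cases "rel S x w")
    case False
    then show ?thesis by (simp add: conv_def)
  next
    case True
    have left: "conv S f g x y = (\<Sum>z\<in>{z\<in>intv S x w. z \<subseteq> y}. f x z * g z y)"
      if "y \<in> intv S x w" for y
    proof -
      have "intv S x y = {z\<in>intv S x w. z \<subseteq> y}" using that by (auto simp: intv_def)
      with intv_rel(1)[OF True that] show ?thesis by (simp add: conv_def)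
    qed
    have right: "conv S g h z w = (\<Sum>y\<in>{y\<in>intv S x w. z \<subseteq> y}. g z y * h y w)"
      if "z \<in> intv S x w" for z
    proof -
      have "intv S z w = {y\<in>intv S x w. z \<subseteq> y}" using that by (auto simp: intv_def)
      with intv_rel(2)[OF True that] show ?thesis by (simp add: conv_def)
    qed
    have "conv S (conv S f g) h x w
        = (\<Sum>y\<in>intv S x w. \<Sum>z\<in>{z\<in>intv S x w. z \<subseteq> y}. f x z * g z y * h y w)"
      using True by (simp add: conv_rel left sum_distrib_right cong: sum.cong)
    also have "\<dots> = (\<Sum>z\<in>intv S x w. \<Sum>y\<in>{y\<in>intv S x w. z \<subseteq> y}. f x z * g z y * h y w)"
      by (rule sum.swap_restrict) (simp_all add: assms finite_intv)
    also have "\<dots> = conv S f (conv S g h) x w"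
      using True by (simp add: conv_rel right sum_distrib_left mult.assoc cong: sum.cong)
    finally show ?thesis .
  qed
qed

lemma conv_delta_right:
  assumes "f \<in> incalg S" "finite S"
  shows "conv S f (delta S) = f"
proof (intro ext)
  fix x z
  have "(\<Sum>y\<in>intv S x z. f x y * delta S y z) = (\<Sum>y\<in>intv S x z. if y = z then f x y else 0)"
    by (rule sum.cong) (auto simp: delta_def intv_def)
  then show "conv S f (delta S) x z = f x z"
    using assms by (auto simp: conv_def incalg_def intv_def rel_def sum.delta)
qed

lemma conv_delta_left:
  assumes "f \<in> incalg S" "finite S"
  shows "conv S (delta S) f = f"
proof (intro ext)
  fix x z
  have "(\<Sum>y\<in>intv S x z. delta S x y * f y z) = (\<Sum>y\<in>intv S x z. if y = x then f y z else 0)"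
    by (rule sum.cong) (auto simp: delta_def intv_def)
  then show "conv S (delta S) f x z = f x z"
    using assms by (auto simp: conv_def incalg_def intv_def rel_def)
qed

lemma left_inverse_eq_right_inverse:
  assumes "finite S" "l \<in> incalg S" "r \<in> incalg S"
    and "conv S l f = delta S" "conv S f r = delta S"
  shows "l = r"
proof -
  have "l = conv S l (conv S f r)" using assms by (simp add: conv_delta_right)
  also have "\<dots> = conv S (conv S l f) r" by (simp add: conv_assoc assms(1))
  also have "\<dots> = r" using assms by (simp add: conv_delta_left)
  finally show ?thesis .
qed

(* Left and right inverses of zeta by the usual recursions; they agree by associativity.  The
   finiteness guards only serve termination and are vacuous on families of finite sets. *)
function mobius_left_rec :: "'b set set \<Rightarrow> 'b set \<Rightarrow> 'b set \<Rightarrow> int" where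
  "mobius_left_rec S x y = (if x = y then 1 else if finite y
     then - (\<Sum>z\<in>{z\<in>S. x \<subseteq> z \<and> z \<subset> y}. mobius_left_rec S x z) else 0)"
  by auto
termination
  by (relation "inv_image finite_psubset (\<lambda>(S, x, y). y)") auto

function mobius_right_rec :: "'b set set \<Rightarrow> 'b set \<Rightarrow> 'b set \<Rightarrow> int" where
  "mobius_right_rec S x y = (if x = y then 1 else if finite y \<and> x \<subseteq> y
     then - (\<Sum>z\<in>{z\<in>S. x \<subset> z \<and> z \<subseteq> y}. mobius_right_rec S z y) else 0)"
  by auto
termination
  by (relation "measure (\<lambda>(S, x, y). card (y - x))") (auto intro!: psubset_card_mono)

declare mobius_left_rec.simps [simp del] mobius_right_rec.simps [simp del]

definition int_incidence :: "'b set set \<Rightarrow> ('b set \<Rightarrow> 'b set \<Rightarrow> int)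
    \<Rightarrow> 'b set \<Rightarrow> 'b set \<Rightarrow> 'c::comm_ring_1" where
  "int_incidence S f = (\<lambda>x y. if rel S x y then of_int (f x y) else 0)"

lemma int_incidence_in_incalg: "int_incidence S f \<in> incalg S"
  by (simp add: int_incidence_def incalg_def)

lemma conv_int_incidence_zeta:
  "conv S (int_incidence S f) (zeta S) x y = (if rel S x y then of_int (\<Sum>z\<in>intv S x y. f x z) else 0)"
  by (auto simp: conv_def int_incidence_def zeta_def intv_def rel_def intro!: sum.cong)

lemma conv_zeta_int_incidence:
  "conv S (zeta S) (int_incidence S f) x y = (if rel S x y then of_int (\<Sum>z\<in>intv S x y. f z y) else 0)"
  by (auto simp: conv_def int_incidence_def zeta_def intv_def rel_def intro!: sum.cong)

lemma mobius_left_rec_zeta: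
  assumes "finite S" "\<And>y. y \<in> S \<Longrightarrow> finite y"
  shows "conv S (int_incidence S (mobius_left_rec S)) (zeta S) = delta S"
proof (intro ext)
  fix x y
  have "(\<Sum>z\<in>intv S x y. mobius_left_rec S x z) = (if x = y then 1 else 0)" if "rel S x y"
  proof (cases "x = y")
    case True
    with that have "intv S x y = {x}" by (auto simp: intv_def rel_def)
    with True show ?thesis by (simp add: mobius_left_rec.simps)
  next
    case False
    let ?below = "{z\<in>S. x \<subseteq> z \<and> z \<subset> y}"
    have "intv S x y = insert y ?below"
      using that by (auto simp: intv_def rel_def)
    then have "(\<Sum>z\<in>intv S x y. mobius_left_rec S x z)
        = mobius_left_rec S x y + (\<Sum>z\<in>?below. mobius_left_rec S x z)"
      using assms(1) by simp
    also have "\<dots> = 0"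
      using False that assms(2) by (subst mobius_left_rec.simps) (simp add: rel_def)
    finally show ?thesis using False by simp
  qed
  then show "conv S (int_incidence S (mobius_left_rec S)) (zeta S) x y = delta S x y"
    by (auto simp: conv_int_incidence_zeta delta_def rel_def simp del: of_int_sum)
qed

lemma zeta_mobius_right_rec:
  assumes "finite S" "\<And>y. y \<in> S \<Longrightarrow> finite y"
  shows "conv S (zeta S) (int_incidence S (mobius_right_rec S)) = delta S"
proof (intro ext)
  fix x y
  have "(\<Sum>z\<in>intv S x y. mobius_right_rec S z y) = (if x = y then 1 else 0)" if "rel S x y"
  proof (cases "x = y")
    case True
    with that have "intv S x y = {x}" by (auto simp: intv_def rel_def)
    with True show ?thesis by (simp add: mobius_right_rec.simps)
  next
    case False
    let ?above = "{z\<in>S. x \<subset> z \<and> z \<subseteq> y}"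
    have "intv S x y = insert x ?above"
      using that by (auto simp: intv_def rel_def)
    then have "(\<Sum>z\<in>intv S x y. mobius_right_rec S z y)
        = mobius_right_rec S x y + (\<Sum>z\<in>?above. mobius_right_rec S z y)"
      using assms(1) by simp
    also have "\<dots> = 0"
      using False that assms(2) by (subst mobius_right_rec.simps) (simp add: rel_def)
    finally show ?thesis using False by simp
  qed
  then show "conv S (zeta S) (int_incidence S (mobius_right_rec S)) x y = delta S x y"
    by (auto simp: conv_zeta_int_incidence delta_def rel_def simp del: of_int_sum)
qed

lemma mobius_eq_int_incidence:
  assumes "finite S" "\<And>y. y \<in> S \<Longrightarrow> finite y"
  shows "mobius S = (int_incidence S (mobius_left_rec S) :: _ \<Rightarrow> _ \<Rightarrow> 'c::comm_ring_1)"
proof -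
  let ?l = "int_incidence S (mobius_left_rec S) :: _ \<Rightarrow> _ \<Rightarrow> 'c"
  let ?r = "int_incidence S (mobius_right_rec S) :: _ \<Rightarrow> _ \<Rightarrow> 'c"
  have left: "conv S ?l (zeta S) = delta S" and right: "conv S (zeta S) ?r = delta S"
    using mobius_left_rec_zeta zeta_mobius_right_rec assms by blast+
  have inverse: "m = ?r" if "m \<in> incalg S" "conv S m (zeta S) = delta S" for m
    using left_inverse_eq_right_inverse[OF assms(1) that(1) _ that(2) right]
    by (simp add: int_incidence_in_incalg)
  have "?l = ?r" by (rule inverse) (simp_all add: int_incidence_in_incalg left)
  show ?thesis
    unfolding mobius_def
  proof (rule the_equality)
    show "?l \<in> incalg S \<and> conv S ?l (zeta S) = delta S \<and> conv S (zeta S) ?l = delta S"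
      using left right \<open>?l = ?r\<close> int_incidence_in_incalg by metis
  next
    fix m :: "_ \<Rightarrow> _ \<Rightarrow> 'c"
    assume "m \<in> incalg S \<and> conv S m (zeta S) = delta S \<and> conv S (zeta S) m = delta S"
    then have "m = ?r" by (intro inverse) simp_all
    with \<open>?l = ?r\<close> show "m = ?l" by simp
  qed
qed

lemma mobius_zeta:
  assumes "finite S" "\<And>y. y \<in> S \<Longrightarrow> finite y"
  shows "conv S (mobius S) (zeta S) = delta S"
  using assms by (simp add: mobius_eq_int_incidence mobius_left_rec_zeta)

lemma zeta_mobius:
  assumes "finite S" "\<And>y. y \<in> S \<Longrightarrow> finite y"
  shows "conv S (zeta S) (mobius S) = (delta S :: _ \<Rightarrow> _ \<Rightarrow> 'c::comm_ring_1)"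
proof -
  have "(mobius S :: _ \<Rightarrow> _ \<Rightarrow> 'c) = int_incidence S (mobius_right_rec S)"
    by (rule left_inverse_eq_right_inverse[OF assms(1) _ int_incidence_in_incalg
          mobius_zeta[OF assms] zeta_mobius_right_rec[OF assms]])
      (simp add: mobius_eq_int_incidence assms int_incidence_in_incalg)
  then show ?thesis using zeta_mobius_right_rec[OF assms] by simp
qed

lemma coeff_bar_poly: "coeff (bar_poly n p) i = (if i \<le> n then coeff p (n - i) else 0)"
  by (simp add: bar_poly_def coeff_sum coeff_monom)

lemma degree_bar_poly_le: "degree (bar_poly n p) \<le> n"
  by (rule degree_le) (simp add: coeff_bar_poly)

lemma bar_poly_diff: "bar_poly n (p - q) = bar_poly n p - bar_poly n q"
  by (rule poly_eqI) (simp add: coeff_bar_poly)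

lemma bar_poly_sum: "bar_poly n (\<Sum>i\<in>A. f i) = (\<Sum>i\<in>A. bar_poly n (f i))"
  by (rule poly_eqI) (simp add: coeff_bar_poly coeff_sum)

lemma bar_poly_monom: "j \<le> n \<Longrightarrow> bar_poly n (monom c j) = monom c (n - j)"
  by (rule poly_eqI) (auto simp: coeff_bar_poly coeff_monom)

lemma bar_poly_const: "bar_poly n [:c:] = monom c n"
  using bar_poly_monom[of 0 n c] by (simp add: monom_0)

lemma bar_poly_mult:
  fixes p q :: "'c::comm_ring_1 poly"
  assumes "degree p \<le> n" "degree q \<le> m"
  shows "bar_poly (n + m) (p * q) = bar_poly n p * bar_poly m q"
proof -
  have "p * q = (\<Sum>i\<le>n. monom (coeff p i) i) * (\<Sum>j\<le>m. monom (coeff q j) j)"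
    using poly_as_sum_of_monoms'[OF assms(1)] poly_as_sum_of_monoms'[OF assms(2)] by simp
  then have "bar_poly (n + m) (p * q)
      = bar_poly (n + m) (\<Sum>i\<le>n. \<Sum>j\<le>m. monom (coeff p i * coeff q j) (i + j))"
    by (simp add: sum_product mult_monom)
  also have "\<dots> = (\<Sum>i\<le>n. \<Sum>j\<le>m. monom (coeff p i) (n - i) * monom (coeff q j) (m - j))"
    by (simp add: bar_poly_sum bar_poly_monom mult_monom)
  also have "\<dots> = bar_poly n (\<Sum>i\<le>n. monom (coeff p i) i) * bar_poly m (\<Sum>j\<le>m. monom (coeff q j) j)"
    by (simp add: sum_product bar_poly_sum bar_poly_monom)
  also have "\<dots> = bar_poly n p * bar_poly m q"
    using poly_as_sum_of_monoms'[OF assms(1)] poly_as_sum_of_monoms'[OF assms(2)] by simp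
  finally show ?thesis .
qed

lemma degree_power_le_mult: "degree p \<le> n \<Longrightarrow> degree (p ^ k) \<le> n * k"
  using degree_power_le[of p k] by (metis mult.commute mult_le_mono2 order_trans)

lemma bar_poly_power:
  fixes p :: "'c::comm_ring_1 poly"
  assumes "degree p \<le> n"
  shows "bar_poly (n * k) (p ^ k) = bar_poly n p ^ k"
proof (induction k)
  case 0
  then show ?case by (simp add: bar_poly_def)
next
  case (Suc k)
  have "degree (p ^ k) \<le> n * k" using assms by (rule degree_power_le_mult)
  then have "bar_poly (n + n * k) (p * p ^ k) = bar_poly n p * bar_poly (n * k) (p ^ k)"
    by (intro bar_poly_mult assms)
  with Suc show ?case by simp
qed

lemma bar_poly_degree_0: "degree p = 0 \<Longrightarrow> bar_poly 0 p = p"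
  using bar_poly_const[of 0 "coeff p 0"] degree_0_id[of p] by (simp add: monom_0)

lemma bar_poly_fixed_low_degree:
  assumes "bar_poly n p = p" "2 * degree p < n"
  shows "p = 0"
proof (rule poly_eqI)
  fix i
  show "coeff p i = coeff 0 i"
  proof (cases "i \<le> degree p")
    case True
    with assms(2) have "i \<le> n" "degree p < n - i" by linarith+
    then have "coeff p i = coeff p (n - i)"
      using arg_cong[OF assms(1), of "\<lambda>p. coeff p i"] by (simp add: coeff_bar_poly)
    with \<open>degree p < n - i\<close> show ?thesis by (simp add: coeff_eq_0)
  qed (simp add: coeff_eq_0)
qed

definition rank_scale :: "('b \<Rightarrow> 'b \<Rightarrow> nat) \<Rightarrow> 'c::comm_ring_1
    \<Rightarrow> ('b \<Rightarrow> 'b \<Rightarrow> 'c) \<Rightarrow> ('b \<Rightarrow> 'b \<Rightarrow> 'c)" where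
  "rank_scale r a f = (\<lambda>x y. a ^ r x y * f x y)"

lemma rank_scale_rank_scale: "rank_scale r a (rank_scale r b f) = rank_scale r (a * b) f"
  by (simp add: rank_scale_def power_mult_distrib mult.assoc)

lemma rank_scale_1 [simp]: "rank_scale r 1 f = f"
  by (simp add: rank_scale_def)

lemma rank_scale_delta: "(\<And>x. x \<in> S \<Longrightarrow> r x x = 0) \<Longrightarrow> rank_scale r a (delta S) = delta S"
  by (auto simp: rank_scale_def delta_def intro!: ext)

lemma rank_scale_in_incalg: "f \<in> incalg S \<Longrightarrow> rank_scale r a f \<in> incalg S"
  by (simp add: rank_scale_def incalg_def)

lemma conv_rank_scale:
  assumes "\<And>x y z. rel S x y \<Longrightarrow> rel S y z \<Longrightarrow> r x z = r x y + r y z"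
  shows "conv S (rank_scale r a f) (rank_scale r a g) = rank_scale r a (conv S f g)"
proof (intro ext)
  fix x z
  have "a ^ r x y * f x y * (a ^ r y z * g y z) = a ^ r x z * (f x y * g y z)"
    if "rel S x z" "y \<in> intv S x z" for y
    using assms[OF intv_rel[OF that]] by (simp add: power_add algebra_simps)
  then show "conv S (rank_scale r a f) (rank_scale r a g) x z = rank_scale r a (conv S f g) x z"
    by (simp add: conv_def rank_scale_def sum_distrib_left cong: sum.cong)
qed

lemma rank_scale_in_I_rho:
  assumes "degree a \<le> k" "f \<in> incalg S" "\<And>x y. degree (f x y) = 0"
  shows "rank_scale r a f \<in> I_rho S (\<lambda>x y. k * r x y)"
  unfolding I_rho_def
proof (intro CollectI conjI allI impI rank_scale_in_incalg assms(2))
  fix x y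
  have "degree (a ^ r x y * f x y) \<le> degree a * r x y"
    using degree_mult_le[of "a ^ r x y" "f x y"] degree_power_le[of a "r x y"] assms(3) by simp
  also have "\<dots> \<le> k * r x y" using assms(1) by (simp add: mult.commute)
  finally show "degree (rank_scale r a f x y) \<le> k * r x y" by (simp add: rank_scale_def)
qed

lemma bar_rank_scale:
  assumes "degree a \<le> k" "f \<in> incalg S" "\<And>x y. degree (f x y) = 0"
  shows "bar S (\<lambda>x y. k * r x y) (rank_scale r a f) = rank_scale r (bar_poly k a) f"
proof (intro ext)
  fix x y
  have "degree (a ^ r x y) \<le> k * r x y" using assms(1) by (rule degree_power_le_mult)
  then have "bar_poly (k * r x y + 0) (a ^ r x y * f x y) = bar_poly k a ^ r x y * f x y"
    by (subst bar_poly_mult) (simp_all add: assms bar_poly_power bar_poly_degree_0)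
  then show "bar S (\<lambda>x y. k * r x y) (rank_scale r a f) x y = rank_scale r (bar_poly k a) f x y"
    using assms(2) by (simp add: bar_def rank_scale_def incalg_def)
qed

lemma conv_in_I_rho:
  assumes "f \<in> I_rho S rho" "g \<in> I_rho S rho" "finite S"
    and "\<And>x y z. rel S x y \<Longrightarrow> rel S y z \<Longrightarrow> rho x z = rho x y + rho y z"
  shows "conv S f g \<in> I_rho S rho"
  unfolding I_rho_def
proof (intro CollectI conjI allI impI conv_in_incalg)
  fix x z
  assume xz: "rel S x z"
  have "degree (f x y * g y z) \<le> rho x z" if "y \<in> intv S x z" for y
  proof -
    note rels = intv_rel[OF xz that]
    have "degree (f x y * g y z) \<le> degree (f x y) + degree (g y z)" by (rule degree_mult_le)
    also have "\<dots> \<le> rho x y + rho y z"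
      using assms(1,2) rels by (intro add_mono) (auto simp: I_rho_def)
    finally show ?thesis using assms(4)[OF rels] by simp
  qed
  then show "degree (conv S f g x z) \<le> rho x z"
    using xz assms(3) by (simp add: conv_rel degree_sum_le finite_intv)
qed

lemma bar_conv:
  assumes "f \<in> I_rho S rho" "g \<in> I_rho S rho"
    and "\<And>x y z. rel S x y \<Longrightarrow> rel S y z \<Longrightarrow> rho x z = rho x y + rho y z"
  shows "bar S rho (conv S f g) = conv S (bar S rho f) (bar S rho g)"
proof (intro ext)
  fix x z
  have "bar_poly (rho x z) (f x y * g y z) = bar S rho f x y * bar S rho g y z"
    if "rel S x z" "y \<in> intv S x z" for y
  proof -
    note rels = intv_rel[OF that]
    have "bar_poly (rho x y + rho y z) (f x y * g y z) = bar_poly (rho x y) (f x y) * bar_poly (rho y z) (g y z)"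
      using assms(1,2) rels by (intro bar_poly_mult) (auto simp: I_rho_def)
    then show ?thesis using assms(3)[OF rels] rels by (simp add: bar_def)
  qed
  then show "bar S rho (conv S f g) x z = conv S (bar S rho f) (bar S rho g) x z"
    by (simp add: conv_def bar_def bar_poly_sum cong: sum.cong)
qed

lemma conv_split_top:
  assumes "finite S" "rel S x y" "\<kappa> y y = 1"
  shows "conv S g \<kappa> x y = g x y + (\<Sum>z\<in>intv S x y - {y}. g x z * \<kappa> z y)"
proof -
  have "y \<in> intv S x y" using assms(2) by (auto simp: intv_def rel_def)
  then show ?thesis
    using assms by (simp add: conv_rel finite_intv sum.remove)
qed

lemma left_KLS_unique:
  assumes fin: "finite S"
    and add: "\<And>x y z. rel S x y \<Longrightarrow> rel S y z \<Longrightarrow> rho x z = rho x y + rho y z"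
    and pos: "\<And>x y. rel S x y \<Longrightarrow> x \<noteq> y \<Longrightarrow> 0 < rho x y"
    and diag: "\<And>x. x \<in> S \<Longrightarrow> \<kappa> x x = 1"
    and g: "g \<in> I_half S rho" "bar S rho g = conv S g \<kappa>"
    and g': "g' \<in> I_half S rho" "bar S rho g' = conv S g' \<kappa>"
  shows "g' = g"
proof (intro ext)
  fix x y
  show "g' x y = g x y"
  proof (cases "rel S x y")
    case False
    then show ?thesis using g(1) g'(1) by (simp add: I_half_def I_rho_def incalg_def)
  next
    case True
    then show ?thesis
    proof (induction y rule: measure_induct_rule[of "rho x"])
      case (less y)
      show ?case
      proof (cases "x = y")
        case True
        then show ?thesis using g(1) g'(1) less.prems by (simp add: I_half_def rel_def)
      next
        case False
        have "g' x z = g x z" if "z \<in> intv S x y - {y}" for z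
        proof (rule less.IH)
          note rels = intv_rel[OF less.prems, of z]
          show "rho x z < rho x y" using that add[OF rels] pos[OF rels(2)] by auto
          show "rel S x z" using rels that by blast
        qed
        then have lower: "(\<Sum>z\<in>intv S x y - {y}. g' x z * \<kappa> z y) = (\<Sum>z\<in>intv S x y - {y}. g x z * \<kappa> z y)"
          by simp
        have "\<kappa> y y = 1" using less.prems diag by (simp add: rel_def)
        have expand: "bar_poly (rho x y) (f x y) = f x y + (\<Sum>z\<in>intv S x y - {y}. f x z * \<kappa> z y)"
          if "bar S rho f = conv S f \<kappa>" for f
          using fun_cong[OF fun_cong[OF that, of x], of y] less.prems
            conv_split_top[where \<kappa> = \<kappa>, OF fin less.prems \<open>\<kappa> y y = 1\<close>]
          by (simp add: bar_def)
        have "bar_poly (rho x y) (g x y - g' x y) = g x y - g' x y"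
          using expand[OF g(2)] expand[OF g'(2)] lower by (simp add: bar_poly_diff)
        moreover have "2 * degree (g x y - g' x y) < rho x y"
          using g(1) g'(1) less.prems False degree_diff_le_max[of "g x y" "g' x y"]
          by (fastforce simp: I_half_def)
        ultimately show ?thesis using bar_poly_fixed_low_degree by fastforce
      qed
    qed
  qed
qed

locale weakly_ranked_family =
  fixes S :: "'b set set" and r :: "'b set \<Rightarrow> 'b set \<Rightarrow> nat"
  assumes finite_family: "finite S"
    and finite_members: "\<And>x. x \<in> S \<Longrightarrow> finite x"
    and rank_add: "\<And>x y z. rel S x y \<Longrightarrow> rel S y z \<Longrightarrow> r x z = r x y + r y z"
    and rank_pos: "\<And>x y. rel S x y \<Longrightarrow> x \<noteq> y \<Longrightarrow> 0 < r x y"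
begin

lemma rank_refl: "x \<in> S \<Longrightarrow> r x x = 0"
  using rank_add[of x x x] by (simp add: rel_def)

lemma scaled_rank_add: "rel S x y \<Longrightarrow> rel S y z \<Longrightarrow> k * r x z = k * r x y + k * r y z"
  by (simp add: rank_add distrib_left)

lemma mobius_diag: "x \<in> S \<Longrightarrow> mobius S x x = (1 :: int poly)"
  by (simp add: mobius_eq_int_incidence finite_family finite_members int_incidence_def rel_def
      mobius_left_rec.simps)

lemma degree_mobius: "degree (mobius S x y :: int poly) = 0"
  by (simp add: mobius_eq_int_incidence finite_family finite_members int_incidence_def of_int_poly)

lemma degree_zeta: "degree (zeta S x y :: int poly) = 0"
  by (simp add: zeta_def)

lemma mobius_in_incalg: "mobius S \<in> incalg S"
  by (simp add: mobius_eq_int_incidence finite_family finite_members int_incidence_in_incalg)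

abbreviation scaled_zeta :: "int poly \<Rightarrow> 'b set \<Rightarrow> 'b set \<Rightarrow> int poly" where
  "scaled_zeta a \<equiv> rank_scale r a (zeta S)"

abbreviation scaled_mobius :: "int poly \<Rightarrow> 'b set \<Rightarrow> 'b set \<Rightarrow> int poly" where
  "scaled_mobius a \<equiv> rank_scale r a (mobius S)"

lemma rank_scale_conv_scaled:
  "rank_scale r c (conv S (scaled_mobius a) (scaled_zeta b))
     = conv S (scaled_mobius (c * a)) (scaled_zeta (c * b))"
  by (simp add: conv_rank_scale[symmetric] rank_add rank_scale_rank_scale)

lemma scaled_mobius_zeta: "conv S (scaled_mobius a) (scaled_zeta a) = delta S"
  by (simp add: conv_rank_scale rank_add mobius_zeta finite_family finite_members
      rank_scale_delta rank_refl)

lemma scaled_zeta_mobius: "conv S (scaled_zeta a) (scaled_mobius a) = delta S"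
  by (simp add: conv_rank_scale rank_add zeta_mobius finite_family finite_members
      rank_scale_delta rank_refl)

lemma conv_scaled_cancel:
  "conv S (conv S (scaled_mobius a) (scaled_zeta b)) (conv S (scaled_mobius b) (scaled_zeta c))
     = conv S (scaled_mobius a) (scaled_zeta c)"
proof -
  have "conv S (conv S (scaled_mobius a) (scaled_zeta b)) (conv S (scaled_mobius b) (scaled_zeta c))
      = conv S (scaled_mobius a) (conv S (conv S (scaled_zeta b) (scaled_mobius b)) (scaled_zeta c))"
    by (simp only: conv_assoc[OF finite_family])
  then show ?thesis
    by (simp add: scaled_zeta_mobius conv_delta_left finite_family rank_scale_in_incalg zeta_in_incalg)
qed

lemma scaled_diag: "x \<in> S \<Longrightarrow> conv S (scaled_mobius a) (scaled_zeta b) x x = 1"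
proof -
  assume "x \<in> S"
  moreover have "intv S x x = {x}" using \<open>x \<in> S\<close> by (auto simp: intv_def)
  ultimately show ?thesis
    by (simp add: conv_def rel_def rank_scale_def mobius_diag rank_refl zeta_def)
qed

lemma scaled_in_I_rho:
  assumes "degree a \<le> k" "degree b \<le> k"
  shows "conv S (scaled_mobius a) (scaled_zeta b) \<in> I_rho S (\<lambda>x y. k * r x y)"
  using assms
  by (intro conv_in_I_rho rank_scale_in_I_rho finite_family scaled_rank_add)
    (simp_all add: mobius_in_incalg degree_mobius zeta_in_incalg degree_zeta)

lemma bar_scaled:
  assumes "degree a \<le> k" "degree b \<le> k"
  shows "bar S (\<lambda>x y. k * r x y) (conv S (scaled_mobius a) (scaled_zeta b))
     = conv S (scaled_mobius (bar_poly k a)) (scaled_zeta (bar_poly k b))"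
  using assms
  by (simp add: bar_conv rank_scale_in_I_rho bar_rank_scale scaled_rank_add
      mobius_in_incalg degree_mobius zeta_in_incalg degree_zeta)

lemma is_kernel_scaled:
  assumes "degree a \<le> k" "degree b \<le> k" "bar_poly k a = b" "bar_poly k b = a"
  shows "is_kernel S (\<lambda>x y. k * r x y) (conv S (scaled_mobius a) (scaled_zeta b))"
  using assms
  by (simp add: is_kernel_def scaled_in_I_rho scaled_diag bar_scaled conv_scaled_cancel
      scaled_mobius_zeta)

lemma is_left_KLS_scaled:
  assumes "0 < k" "degree a \<le> k" "degree c \<le> k" "bar_poly k a = b" "bar_poly k c = c"
    and half: "conv S (scaled_mobius c) (scaled_zeta a) \<in> I_half S (\<lambda>x y. k * r x y)"
  shows "is_left_KLS S (\<lambda>x y. k * r x y) (conv S (scaled_mobius a) (scaled_zeta b))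
      (conv S (scaled_mobius c) (scaled_zeta a))"
proof -
  let ?\<kappa> = "conv S (scaled_mobius a) (scaled_zeta b)"
  let ?h = "conv S (scaled_mobius c) (scaled_zeta a)"
  have bar_h: "bar S (\<lambda>x y. k * r x y) ?h = conv S ?h ?\<kappa>"
    using assms by (simp add: bar_scaled conv_scaled_cancel)
  have "g = ?h" if "g \<in> I_half S (\<lambda>x y. k * r x y)" "bar S (\<lambda>x y. k * r x y) g = conv S g ?\<kappa>" for g
  proof (rule left_KLS_unique[where rho = "\<lambda>x y. k * r x y" and \<kappa> = ?\<kappa>, OF finite_family])
    show "k * r x z = k * r x y + k * r y z" if "rel S x y" "rel S y z" for x y z
      using that by (rule scaled_rank_add)
    show "0 < k * r x y" if "rel S x y" "x \<noteq> y" for x y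
      using rank_pos[OF that] assms(1) by simp
  qed (use scaled_diag half bar_h that in simp_all)
  then show ?thesis using half bar_h unfolding is_left_KLS_def by blast
qed

end

lemma pcompose_power: "pcompose (p ^ n) q = pcompose p q ^ n"
  for p q :: "'c::comm_ring_1 poly"
  by (induction n) (simp_all add: pcompose_1 pcompose_mult)

lemma pcompose_degree_0: "degree p = 0 \<Longrightarrow> pcompose p q = p"
  by (metis degree_0_id pcompose_const)

locale matroid_flats =
  fixes E :: "'a set" and indep :: "'a set \<Rightarrow> bool"
  assumes matroid: "matroid E indep"
begin

lemma finite_ground: "finite E"
  using matroid by (simp add: matroid_def)

lemma mrank_mono:
  assumes "X \<subseteq> Y"
  shows "mrank indep X \<le> mrank indep Y"
  unfolding mrank_def
proof (rule Max_mono)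
  show "card ` {I. I \<subseteq> X \<and> indep I} \<subseteq> card ` {I. I \<subseteq> Y \<and> indep I}"
    using assms by auto
  show "card ` {I. I \<subseteq> X \<and> indep I} \<noteq> {}"
    using matroid by (auto simp: matroid_def)
  have "{I. I \<subseteq> Y \<and> indep I} \<subseteq> Pow E"
    using matroid by (auto simp: matroid_def)
  then show "finite (card ` {I. I \<subseteq> Y \<and> indep I})"
    using finite_ground by (simp add: finite_subset)
qed

sublocale weakly_ranked_family "flats E indep" "rr indep"
proof
  show "finite (flats E indep)"
    using finite_ground by (auto simp: flats_def intro: finite_subset[of _ "Pow E"])
  show "finite F" if "F \<in> flats E indep" for F
    using that finite_ground by (auto simp: flats_def intro: finite_subset)
  show "rr indep F H = rr indep F G + rr indep G H"
    if "rel (flats E indep) F G" "rel (flats E indep) G H" for F G H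
    using that mrank_mono[of F G] mrank_mono[of G H] by (auto simp: rel_def rr_def)
  show "0 < rr indep F G" if FG: "rel (flats E indep) F G" "F \<noteq> G" for F G
  proof -
    obtain e where e: "e \<in> G" "e \<notin> F" using FG unfolding rel_def by blast
    then have "mrank indep F < mrank indep (insert e F)"
      using FG by (auto simp: rel_def flats_def)
    also have "\<dots> \<le> mrank indep G"
      using FG e by (intro mrank_mono) (auto simp: rel_def)
    finally show ?thesis by (simp add: rr_def)
  qed
qed

abbreviation L :: "'a set set" where
  "L \<equiv> flats E indep"

lemma pcompose_chi:
  assumes "rel L F G"
  shows "pcompose (chi E indep F G) q = conv L (mobius L) (scaled_zeta q) F G"
  using assms
  by (auto simp: chi_def conv_def pcompose_sum pcompose_mult pcompose_power pcompose_pCons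
      pcompose_degree_0 degree_mobius rank_scale_def zeta_def intv_def rel_def intro!: sum.cong)

lemma poly_chi_const:
  assumes "rel L F G"
  shows "[:poly (chi E indep F G) c:] = conv L (mobius L) (scaled_zeta [:c:]) F G"
  using pcompose_chi[OF assms, of "[:c:]"] by (simp add: pcompose_pCons_0)

lemma chi_signed_eval_minus_one:
  assumes "rel L F G"
  shows "[:(-1) ^ rr indep F G * poly (chi E indep F G) (-1):]
      = conv L (scaled_mobius [:-1:]) (zeta L) F G"
proof -
  have "[:(-1) ^ rr indep F G * poly (chi E indep F G) (-1):]
      = [:(-1) ^ rr indep F G:] * [:poly (chi E indep F G) (-1):]"
    by simp
  also have "\<dots> = [:-1:] ^ rr indep F G * conv L (scaled_mobius 1) (scaled_zeta [:-1:]) F G"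
    by (simp only: poly_chi_const[OF assms] poly_const_pow rank_scale_1)
  also have "\<dots> = rank_scale (rr indep) [:-1:] (conv L (scaled_mobius 1) (scaled_zeta [:-1:])) F G"
    by (simp add: rank_scale_def)
  also have "\<dots> = conv L (scaled_mobius ([:-1:] * 1)) (scaled_zeta ([:-1:] * [:-1:])) F G"
    by (simp only: rank_scale_conv_scaled)
  finally show ?thesis by (simp flip: one_pCons)
qed

lemma kappaM_eq: "kappaM E indep = conv L (scaled_mobius [:1, -1:]) (scaled_zeta [:0, -1, 1:])"
proof -
  have "kappaM E indep = rank_scale (rr indep) [:-1, 1:]
      (conv L (conv L (scaled_mobius [:-1:]) (scaled_zeta 1)) (conv L (scaled_mobius 1) (scaled_zeta [:0, 1:])))"
  proof (intro ext)
    fix F H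
    have "smult ((-1) ^ rr indep F G * poly (chi E indep F G) (-1)) (chi E indep G H)
        = conv L (scaled_mobius [:-1:]) (zeta L) F G * conv L (mobius L) (scaled_zeta [:0, 1:]) G H"
      if "rel L F H" "G \<in> intv L F H" for G
    proof -
      have "smult ((-1) ^ rr indep F G * poly (chi E indep F G) (-1)) (chi E indep G H)
          = [:(-1) ^ rr indep F G * poly (chi E indep F G) (-1):] * pcompose (chi E indep G H) [:0, 1:]"
        by simp
      then show ?thesis
        by (simp only: chi_signed_eval_minus_one[OF intv_rel(1)[OF that]]
            pcompose_chi[OF intv_rel(2)[OF that]])
    qed
    then show "kappaM E indep F H = rank_scale (rr indep) [:-1, 1:]
        (conv L (conv L (scaled_mobius [:-1:]) (scaled_zeta 1)) (conv L (scaled_mobius 1) (scaled_zeta [:0, 1:]))) F H"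
      by (simp add: kappaM_def conv_def rank_scale_def cong: sum.cong)
  qed
  also have "\<dots> = conv L (scaled_mobius ([:-1, 1:] * [:-1:])) (scaled_zeta ([:-1, 1:] * [:0, 1:]))"
    by (simp only: conv_scaled_cancel rank_scale_conv_scaled)
  finally show ?thesis by (simp flip: one_pCons)
qed

(* Up to the sign (-1)^r, h^bc is the bar, for the rank r rather than 2r, of chi(1 - t). *)
lemma hbc_eq: "hbc E indep = conv L (scaled_mobius [:0, -1:]) (scaled_zeta [:1, -1:])"
proof -
  have "hbc E indep = rank_scale (rr indep) [:-1:]
      (bar L (\<lambda>F G. 1 * rr indep F G) (conv L (scaled_mobius 1) (scaled_zeta [:1, -1:])))"
    by (intro ext) (simp add: hbc_def rank_scale_def bar_def pcompose_chi poly_const_pow)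
  also have "\<dots> = rank_scale (rr indep) [:-1:]
      (conv L (scaled_mobius (bar_poly 1 1)) (scaled_zeta (bar_poly 1 [:1, -1:])))"
    by (subst bar_scaled) simp_all
  also have "\<dots> = conv L (scaled_mobius ([:-1:] * [:0, 1:])) (scaled_zeta ([:-1:] * [:-1, 1:]))"
  proof -
    have "bar_poly 1 1 = [:0, 1 :: int:]" "bar_poly 1 [:1, -1:] = [:-1, 1 :: int:]"
      by (simp_all add: bar_poly_def monom_Suc monom_0)
    then show ?thesis by (simp only: rank_scale_conv_scaled)
  qed
  finally show ?thesis by simp
qed

(* The coefficient of t^r in h^bc_FG is +- chi_FG(1), the sum of mu over [F, G]. *)
lemma degree_hbc_less:
  assumes "rel L F G" "F \<noteq> G"
  shows "degree (hbc E indep F G) < rr indep F G"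
proof -
  let ?p = "pcompose (chi E indep F G) [:1, -1:]"
  have hbc: "hbc E indep F G = smult ((-1) ^ rr indep F G) (bar_poly (rr indep F G) ?p)"
    using assms by (simp add: hbc_def)
  have "[:poly (chi E indep F G) 1:] = conv L (mobius L) (zeta L) F G"
    using poly_chi_const[OF assms(1), of 1] by (simp flip: one_pCons)
  also have "\<dots> = 0"
    using assms by (simp add: mobius_zeta finite_family finite_members delta_def)
  finally have "coeff ?p 0 = 0"
    by (simp add: poly_0_coeff_0[symmetric] poly_pcompose)
  then have "coeff (hbc E indep F G) (rr indep F G) = 0"
    by (simp add: hbc coeff_bar_poly)
  moreover have "degree (hbc E indep F G) \<le> rr indep F G"
    unfolding hbc by (rule order.trans[OF degree_smult_le degree_bar_poly_le])
  moreover have "0 < rr indep F G" using rank_pos assms by blast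
  ultimately show ?thesis
    by (metis degree_0 le_neq_implies_less leading_coeff_0_iff)
qed

lemma hbc_in_I_half: "hbc E indep \<in> I_half L (\<lambda>F G. 2 * rr indep F G)"
  unfolding I_half_def
proof (intro CollectI conjI ballI allI impI)
  show "hbc E indep \<in> I_rho L (\<lambda>F G. 2 * rr indep F G)"
    unfolding hbc_eq by (rule scaled_in_I_rho) simp_all
  show "hbc E indep F F = 1" if "F \<in> L" for F
    unfolding hbc_eq using that by (rule scaled_diag)
  show "2 * degree (hbc E indep F G) < 2 * rr indep F G" if "rel L F G \<and> F \<noteq> G" for F G
    using degree_hbc_less that by simp
qed

end

theorem proposition2p17:
  fixes E :: "'a set" and indep :: "'a set \<Rightarrow> bool"
  assumes "matroid E indep"
  shows "is_kernel (flats E indep) (\<lambda>F G. 2 * rr indep F G) (kappaM E indep)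
       \<and> is_left_KLS (flats E indep) (\<lambda>F G. 2 * rr indep F G) (kappaM E indep) (hbc E indep)"
proof -
  interpret matroid_flats E indep by (fact matroid_flats.intro[OF assms])
  have bars: "bar_poly 2 [:1, -1:] = [:0, -1, 1 :: int:]" "bar_poly 2 [:0, -1, 1:] = [:1, -1 :: int:]"
    "bar_poly 2 [:0, -1:] = [:0, -1 :: int:]"
    by (simp_all add: bar_poly_def numeral_2_eq_2 monom_Suc monom_0)
  have "is_kernel L (\<lambda>F G. 2 * rr indep F G) (kappaM E indep)"
    unfolding kappaM_eq by (rule is_kernel_scaled) (simp_all add: bars)
  moreover have "is_left_KLS L (\<lambda>F G. 2 * rr indep F G) (kappaM E indep) (hbc E indep)"
    unfolding kappaM_eq hbc_eq
    by (rule is_left_KLS_scaled) (simp_all add: bars hbc_in_I_half[unfolded hbc_eq])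
  ultimately show ?thesis by blast
qed

end
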